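(* Let $D$ be a perfect subgroup of a group $G$, let $\pi\colon S\to G$ be a surjective group homomorphism with central kernel, and let $\tilde D$ be the smallest subgroup of $S$ with $\pi(\tilde D)=D$. Then the sandwich classification theorem holds for $L(D,G)$ if and only if it holds for $L(\tilde D,S)$, and $\pi$ induces a bijection from the set of $\tilde D$-full subgroups of $S$ onto the set of $D$-full subgroups of $G$.
   Context: A group is perfect if it equals its commutator subgroup; $X^Y$ denotes the subgroup generated by all $b^{-1}ab$, $a\in X$, $b\in Y$. $L(D,G)$ is the lattice of subgroups of $G$ containing $D$; $F\in L(D,G)$ is $D$-full if $D^F=F$. A sandwich of $L(D,G)$ is the set of all subgroups $H$ with $F\le H\le N_G(F)$ for a fixed $D$-full subgroup $F$. The lattice $L(D,G)$ satisfies the sandwich classification theorem if it is the union of its sandwiches, i.e. for every $H\in L(D,G)$ the subgroup $D^H$ is $D$-full and $H\le N_G(D^H)$. The smallest subgroup $\tilde D$ with $\pi(\tilde D)=D$ exists (it is contained in every subgroup mapping onto $D$). *)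

theory Defs
  imports "HOL-Algebra.Algebra"
begin

definition conj_gen :: "('a, 'b) monoid_scheme \<Rightarrow> 'a set \<Rightarrow> 'a set \<Rightarrow> 'a set" where
  "conj_gen G A B = generate G {inv\<^bsub>G\<^esub> b \<otimes>\<^bsub>G\<^esub> a \<otimes>\<^bsub>G\<^esub> b | a b. a \<in> A \<and> b \<in> B}"

definition perfect :: "('a, 'b) monoid_scheme \<Rightarrow> 'a set \<Rightarrow> bool" where
  "perfect G D \<longleftrightarrow> subgroup D G \<and> derived G D = D"

definition sub_lattice :: "('a, 'b) monoid_scheme \<Rightarrow> 'a set \<Rightarrow> 'a set set" where
  "sub_lattice G D = {H. subgroup H G \<and> D \<subseteq> H}"

definition full :: "('a, 'b) monoid_scheme \<Rightarrow> 'a set \<Rightarrow> 'a set \<Rightarrow> bool" where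
  "full G D F \<longleftrightarrow> F \<in> sub_lattice G D \<and> conj_gen G D F = F"

definition sandwich_classification :: "('a, 'b) monoid_scheme \<Rightarrow> 'a set \<Rightarrow> bool" where
  "sandwich_classification G D \<longleftrightarrow>
     (\<forall>H \<in> sub_lattice G D. full G D (conj_gen G D H) \<and> H \<subseteq> normalizer G (conj_gen G D H))"

end

theory Submission
  imports Defs
begin

text \<open>
  Because \<open>ker \<pi>\<close> is central, two preimages of the same element of \<open>G\<close> induce the same
  conjugation on \<open>S\<close>, so \<open>Dt\<^bsup>B\<^esup>\<close> depends only on \<open>\<pi>(B)\<close>: it is the lift
  \<open>Dt\<^bsup>\<pi>\<^sup>-\<^sup>1(H)\<^esup>\<close> of \<open>H = \<pi>(B)\<close>, and \<open>\<pi>\<close> maps this lift onto \<open>D\<^bsup>H\<^esup>\<close>.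
  Minimality of \<open>Dt\<close> makes the lift of \<open>H\<close> the smallest subgroup \<open>Y\<close> of \<open>S\<close> with
  \<open>D\<^bsup>H\<^esup> \<subseteq> \<pi>(Y)\<close>: for \<open>k \<in> S\<close>, the elements of \<open>\<pi>\<^sup>-\<^sup>1(D)\<close> that \<open>k\<close> conjugates
  into \<open>Y\<close> form a subgroup mapping onto \<open>D\<close>. Hence the lift of \<open>H\<close> is \<open>Dt\<close>-full exactly
  when \<open>D\<^bsup>H\<^esup>\<close> is \<open>D\<close>-full, which transfers the sandwich classification in both
  directions, and lifting inverts \<open>\<pi>\<close> on full subgroups.
\<close>

definition conjugates :: "('a, 'b) monoid_scheme \<Rightarrow> 'a set \<Rightarrow> 'a set \<Rightarrow> 'a set" where
  "conjugates G A B = {inv\<^bsub>G\<^esub> b \<otimes>\<^bsub>G\<^esub> a \<otimes>\<^bsub>G\<^esub> b | a b. a \<in> A \<and> b \<in> B}"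

lemma conj_gen_eq_generate_conjugates: "conj_gen G A B = generate G (conjugates G A B)"
  unfolding conj_gen_def conjugates_def ..

lemma conjugatesI: "a \<in> A \<Longrightarrow> b \<in> B \<Longrightarrow> inv\<^bsub>G\<^esub> b \<otimes>\<^bsub>G\<^esub> a \<otimes>\<^bsub>G\<^esub> b \<in> conjugates G A B"
  unfolding conjugates_def by blast

lemma conjugatesE:
  assumes "x \<in> conjugates G A B"
  obtains a b where "a \<in> A" "b \<in> B" "x = inv\<^bsub>G\<^esub> b \<otimes>\<^bsub>G\<^esub> a \<otimes>\<^bsub>G\<^esub> b"
  using assms unfolding conjugates_def by blast

lemma conjugates_mono: "B \<subseteq> B' \<Longrightarrow> conjugates G A B \<subseteq> conjugates G A B'"
  unfolding conjugates_def by blast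

context group
begin

lemma inv_cancel_left [simp]: "x \<in> carrier G \<Longrightarrow> y \<in> carrier G \<Longrightarrow> inv x \<otimes> (x \<otimes> y) = y"
  and cancel_inv_left [simp]: "x \<in> carrier G \<Longrightarrow> y \<in> carrier G \<Longrightarrow> x \<otimes> (inv x \<otimes> y) = y"
  by (simp_all add: m_assoc[symmetric])

lemma conjugates_closed: "A \<subseteq> carrier G \<Longrightarrow> B \<subseteq> carrier G \<Longrightarrow> conjugates G A B \<subseteq> carrier G"
  by (blast elim!: conjugatesE intro: m_closed inv_closed)

lemma conj_gen_subgroup: "A \<subseteq> carrier G \<Longrightarrow> B \<subseteq> carrier G \<Longrightarrow> subgroup (conj_gen G A B) G"
  unfolding conj_gen_eq_generate_conjugates by (intro generate_is_subgroup conjugates_closed)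

lemma conj_gen_conjI: "a \<in> A \<Longrightarrow> b \<in> B \<Longrightarrow> inv b \<otimes> a \<otimes> b \<in> conj_gen G A B"
  unfolding conj_gen_eq_generate_conjugates by (intro generate.incl conjugatesI)

lemma conj_gen_mono: "B \<subseteq> B' \<Longrightarrow> conj_gen G A B \<subseteq> conj_gen G A B'"
  unfolding conj_gen_eq_generate_conjugates by (intro mono_generate conjugates_mono)

lemma conj_gen_greater:
  assumes "A \<subseteq> carrier G" "subgroup B G"
  shows "A \<subseteq> conj_gen G A B"
proof
  fix a assume "a \<in> A"
  then have "inv \<one> \<otimes> a \<otimes> \<one> \<in> conj_gen G A B"
    using subgroup.one_closed[OF assms(2)] by (rule conj_gen_conjI)
  then show "a \<in> conj_gen G A B"
    using \<open>a \<in> A\<close> assms(1) by auto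
qed

lemma conj_gen_le:
  assumes "A \<subseteq> B" "subgroup B G"
  shows "conj_gen G A B \<subseteq> B"
  unfolding conj_gen_eq_generate_conjugates using assms
  by (intro generate_subgroup_incl)
     (auto elim!: conjugatesE intro!: subgroup.m_closed subgroup.m_inv_closed)

lemma conj_gen_conj_closed:
  assumes A: "A \<subseteq> carrier G" and B: "subgroup B G" and "c \<in> B" "y \<in> conj_gen G A B"
  shows "inv c \<otimes> y \<otimes> c \<in> conj_gen G A B"
proof -
  have c: "c \<in> carrier G"
    using assms subgroup.subset by blast
  let ?X = "conjugates G A B" and ?conj = "\<lambda>x. inv c \<otimes> x \<otimes> c"
  have X: "?X \<subseteq> carrier G"
    using conjugates_closed[OF A subgroup.subset[OF B]] .
  interpret conj: group_hom G G ?conj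
    using c by unfold_locales (auto simp: hom_def m_assoc)
  have "?conj ` ?X \<subseteq> ?X"
  proof
    fix z assume "z \<in> ?conj ` ?X"
    then obtain a b where ab: "a \<in> A" "b \<in> B" and z: "z = ?conj (inv b \<otimes> a \<otimes> b)"
      by (auto elim!: conjugatesE)
    have "a \<in> carrier G" "b \<in> carrier G"
      using ab A subgroup.mem_carrier[OF B] by auto
    then have "z = inv (b \<otimes> c) \<otimes> a \<otimes> (b \<otimes> c)"
      using z c by (simp add: inv_mult_group m_assoc)
    then show "z \<in> ?X"
      using ab subgroup.m_closed[OF B ab(2) \<open>c \<in> B\<close>] by (simp add: conjugatesI)
  qed
  then have "generate G (?conj ` ?X) \<subseteq> generate G ?X"
    by (intro mono_generate)
  then show ?thesis
    using assms(4) conj.generate_img[OF X] unfolding conj_gen_eq_generate_conjugates by blast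
qed

lemma conj_gen_normalizer:
  assumes A: "A \<subseteq> carrier G" and B: "subgroup B G"
  shows "B \<subseteq> normalizer G (conj_gen G A B)"
proof
  fix k assume k: "k \<in> B"
  let ?Y = "conj_gen G A B"
  have kG: "k \<in> carrier G" and Y: "?Y \<subseteq> carrier G"
    using k subgroup.subset[OF B] subgroup.subset[OF conj_gen_subgroup[OF A subgroup.subset[OF B]]]
    by auto
  have "(\<lambda>y. k \<otimes> y \<otimes> inv k) ` ?Y = ?Y"
  proof (intro equalityI subsetI)
    fix z assume "z \<in> (\<lambda>y. k \<otimes> y \<otimes> inv k) ` ?Y"
    then obtain y where "y \<in> ?Y" "z = inv (inv k) \<otimes> y \<otimes> inv k"
      using kG by auto
    then show "z \<in> ?Y"
      using conj_gen_conj_closed[OF A B subgroup.m_inv_closed[OF B k]] by simp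
  next
    fix y assume y: "y \<in> ?Y"
    have "y = k \<otimes> (inv k \<otimes> y \<otimes> k) \<otimes> inv k"
      using kG y Y by (auto simp: m_assoc)
    then show "y \<in> (\<lambda>y. k \<otimes> y \<otimes> inv k) ` ?Y"
      using conj_gen_conj_closed[OF A B k y] by blast
  qed
  moreover have "k <# ?Y #> inv k = (\<lambda>y. k \<otimes> y \<otimes> inv k) ` ?Y"
    unfolding l_coset_def r_coset_def by auto
  ultimately have "k <# ?Y #> inv k = ?Y"
    by simp
  then show "k \<in> normalizer G ?Y"
    unfolding normalizer_def stabilizer_def using kG Y by simp
qed

lemma sandwich_classification_iff:
  assumes "D \<subseteq> carrier G"
  shows "sandwich_classification G D \<longleftrightarrow>
    (\<forall>H \<in> sub_lattice G D. conj_gen G D (conj_gen G D H) = conj_gen G D H)"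
proof -
  have "full G D (conj_gen G D H) \<and> H \<subseteq> normalizer G (conj_gen G D H)
        \<longleftrightarrow> conj_gen G D (conj_gen G D H) = conj_gen G D H"
    if "H \<in> sub_lattice G D" for H
  proof -
    have H: "subgroup H G"
      using that unfolding sub_lattice_def by blast
    then show ?thesis
      using assms conj_gen_subgroup[OF assms subgroup.subset[OF H]] conj_gen_greater[OF assms H]
        conj_gen_normalizer[OF assms H]
      unfolding full_def sub_lattice_def by blast
  qed
  then show ?thesis
    unfolding sandwich_classification_def by blast
qed

end

lemma (in group_hom) subgroup_vimage:
  assumes "subgroup U H"
  shows "subgroup (carrier G \<inter> h -` U) G"
  using assms by (intro G.subgroupI) (auto simp: subgroup.m_inv_closed subgroup.m_closed subgroup.one_closed)

lemma (in group_hom) image_conjugates: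
  assumes "A \<subseteq> carrier G" "B \<subseteq> carrier G"
  shows "h ` conjugates G A B = conjugates H (h ` A) (h ` B)"
proof (intro equalityI subsetI)
  fix x assume "x \<in> h ` conjugates G A B"
  then obtain a b where "a \<in> A" "b \<in> B" "x = h (inv b \<otimes> a \<otimes> b)"
    by (auto elim!: conjugatesE)
  moreover have "a \<in> carrier G" "b \<in> carrier G"
    using assms \<open>a \<in> A\<close> \<open>b \<in> B\<close> by auto
  ultimately show "x \<in> conjugates H (h ` A) (h ` B)"
    by (simp add: conjugatesI)
next
  fix x assume "x \<in> conjugates H (h ` A) (h ` B)"
  then obtain a b where "a \<in> A" "b \<in> B" "x = inv\<^bsub>H\<^esub> h b \<otimes>\<^bsub>H\<^esub> h a \<otimes>\<^bsub>H\<^esub> h b"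
    by (auto elim!: conjugatesE)
  moreover have "a \<in> carrier G" "b \<in> carrier G"
    using assms \<open>a \<in> A\<close> \<open>b \<in> B\<close> by auto
  ultimately show "x \<in> h ` conjugates G A B"
    by (auto intro!: image_eqI conjugatesI)
qed

lemma (in group_hom) image_conj_gen:
  assumes "A \<subseteq> carrier G" "B \<subseteq> carrier G"
  shows "h ` conj_gen G A B = conj_gen H (h ` A) (h ` B)"
  using generate_img[OF G.conjugates_closed[OF assms]] image_conjugates[OF assms]
  unfolding conj_gen_eq_generate_conjugates by simp

locale central_extension = G: group G + S: group S
  for G :: "('a, 'c) monoid_scheme" and S :: "('b, 'd) monoid_scheme" and \<pi> :: "'b \<Rightarrow> 'a" +
  assumes hom: "\<pi> \<in> hom S G"
    and surj: "\<pi> ` carrier S = carrier G"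
    and central: "\<forall>k \<in> kernel S G \<pi>. \<forall>s \<in> carrier S. k \<otimes>\<^bsub>S\<^esub> s = s \<otimes>\<^bsub>S\<^esub> k"
begin

sublocale \<pi>: group_hom S G \<pi>
  using hom by unfold_locales

lemma image_vimage:
  assumes "E \<subseteq> carrier G"
  shows "\<pi> ` (carrier S \<inter> \<pi> -` E) = E"
proof
  show "E \<subseteq> \<pi> ` (carrier S \<inter> \<pi> -` E)"
  proof
    fix e assume "e \<in> E"
    then obtain s where "s \<in> carrier S" "\<pi> s = e"
      using assms surj by (metis imageE subsetD)
    then show "e \<in> \<pi> ` (carrier S \<inter> \<pi> -` E)"
      using \<open>e \<in> E\<close> by blast
  qed
qed blast

lemma conj_eq_if_image_eq:
  assumes b: "b \<in> carrier S" and b': "b' \<in> carrier S" and "\<pi> b = \<pi> b'" and x: "x \<in> carrier S"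
  shows "inv\<^bsub>S\<^esub> b' \<otimes>\<^bsub>S\<^esub> x \<otimes>\<^bsub>S\<^esub> b' = inv\<^bsub>S\<^esub> b \<otimes>\<^bsub>S\<^esub> x \<otimes>\<^bsub>S\<^esub> b"
proof -
  define z where "z = inv\<^bsub>S\<^esub> b \<otimes>\<^bsub>S\<^esub> b'"
  have z: "z \<in> carrier S"
    unfolding z_def using b b' by simp
  have "\<pi> z = \<one>\<^bsub>G\<^esub>"
    unfolding z_def using assms by simp
  then have "z \<in> kernel S G \<pi>"
    using z unfolding kernel_def by simp
  then have commute: "\<And>y. y \<in> carrier S \<Longrightarrow> y \<otimes>\<^bsub>S\<^esub> z = z \<otimes>\<^bsub>S\<^esub> y"
    using central by metis
  have "b' = b \<otimes>\<^bsub>S\<^esub> z"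
    unfolding z_def using b b' by simp
  then have "inv\<^bsub>S\<^esub> b' \<otimes>\<^bsub>S\<^esub> x \<otimes>\<^bsub>S\<^esub> b'
      = inv\<^bsub>S\<^esub> z \<otimes>\<^bsub>S\<^esub> ((inv\<^bsub>S\<^esub> b \<otimes>\<^bsub>S\<^esub> x \<otimes>\<^bsub>S\<^esub> b) \<otimes>\<^bsub>S\<^esub> z)"
    using b z x by (simp add: S.inv_mult_group S.m_assoc)
  also have "\<dots> = inv\<^bsub>S\<^esub> b \<otimes>\<^bsub>S\<^esub> x \<otimes>\<^bsub>S\<^esub> b"
    using commute b z x by simp
  finally show ?thesis .
qed

lemma conj_gen_vimage_image:
  assumes A: "A \<subseteq> carrier S" and B: "B \<subseteq> carrier S"
  shows "conj_gen S A (carrier S \<inter> \<pi> -` \<pi> ` B) = conj_gen S A B"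
proof -
  have "conjugates S A (carrier S \<inter> \<pi> -` \<pi> ` B) \<subseteq> conjugates S A B"
  proof
    fix w assume "w \<in> conjugates S A (carrier S \<inter> \<pi> -` \<pi> ` B)"
    then obtain a b b' where "a \<in> A" "b \<in> B" "b' \<in> carrier S" "\<pi> b = \<pi> b'"
      and w: "w = inv\<^bsub>S\<^esub> b' \<otimes>\<^bsub>S\<^esub> a \<otimes>\<^bsub>S\<^esub> b'"
      by (auto elim!: conjugatesE)
    then have "w = inv\<^bsub>S\<^esub> b \<otimes>\<^bsub>S\<^esub> a \<otimes>\<^bsub>S\<^esub> b"
      using conj_eq_if_image_eq[of b b' a] A B by blast
    then show "w \<in> conjugates S A B"
      using \<open>a \<in> A\<close> \<open>b \<in> B\<close> by (simp add: conjugatesI)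
  qed
  moreover have "conjugates S A B \<subseteq> conjugates S A (carrier S \<inter> \<pi> -` \<pi> ` B)"
    using B by (intro conjugates_mono) blast
  ultimately show ?thesis
    unfolding conj_gen_eq_generate_conjugates by (simp add: subset_antisym)
qed

end

locale minimal_lift = central_extension G S \<pi>
  for G :: "('a, 'c) monoid_scheme" and S :: "('b, 'd) monoid_scheme" and \<pi> :: "'b \<Rightarrow> 'a" +
  fixes D :: "'a set" and Dt :: "'b set"
  assumes Dt_subgroup: "subgroup Dt S"
    and image_Dt: "\<pi> ` Dt = D"
    and minimal: "\<forall>T. subgroup T S \<and> \<pi> ` T = D \<longrightarrow> Dt \<subseteq> T"
begin

definition lift :: "'a set \<Rightarrow> 'b set" where
  "lift H = conj_gen S Dt (carrier S \<inter> \<pi> -` H)"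

lemma Dt_carrier: "Dt \<subseteq> carrier S"
  using Dt_subgroup subgroup.subset by blast

lemma D_subgroup: "subgroup D G"
  using \<pi>.subgroup_img_is_subgroup[OF Dt_subgroup] image_Dt by simp

lemma D_carrier: "D \<subseteq> carrier G"
  using D_subgroup subgroup.subset by blast

lemma lift_subgroup: "subgroup (lift H) S"
  unfolding lift_def using Dt_carrier by (intro S.conj_gen_subgroup) auto

lemma lift_mono: "H \<subseteq> H' \<Longrightarrow> lift H \<subseteq> lift H'"
  unfolding lift_def by (intro S.conj_gen_mono) blast

lemma image_lift: "H \<subseteq> carrier G \<Longrightarrow> \<pi> ` lift H = conj_gen G D H"
  unfolding lift_def using \<pi>.image_conj_gen[OF Dt_carrier] image_Dt image_vimage by simp

lemma conj_gen_eq_lift: "B \<subseteq> carrier S \<Longrightarrow> conj_gen S Dt B = lift (\<pi> ` B)"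
  unfolding lift_def using conj_gen_vimage_image[OF Dt_carrier] by simp

lemma conj_Dt_subset:
  assumes Y: "subgroup Y S" and k: "k \<in> carrier S"
    and "(\<lambda>x. inv\<^bsub>G\<^esub> \<pi> k \<otimes>\<^bsub>G\<^esub> x \<otimes>\<^bsub>G\<^esub> \<pi> k) ` D \<subseteq> \<pi> ` Y"
  shows "(\<lambda>x. inv\<^bsub>S\<^esub> k \<otimes>\<^bsub>S\<^esub> x \<otimes>\<^bsub>S\<^esub> k) ` Dt \<subseteq> Y"
proof -
  let ?conj = "\<lambda>x. inv\<^bsub>S\<^esub> k \<otimes>\<^bsub>S\<^esub> x \<otimes>\<^bsub>S\<^esub> k"
  let ?T = "(carrier S \<inter> \<pi> -` D) \<inter> (carrier S \<inter> ?conj -` Y)"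
  interpret conj: group_hom S S ?conj
    using k by unfold_locales (auto simp: hom_def S.m_assoc)
  have T: "subgroup ?T S"
    using \<pi>.subgroup_vimage[OF D_subgroup] conj.subgroup_vimage[OF Y]
    by (rule S.subgroups_Inter_pair)
  have "D \<subseteq> \<pi> ` ?T"
  proof
    fix e assume e: "e \<in> D"
    have "inv\<^bsub>G\<^esub> \<pi> k \<otimes>\<^bsub>G\<^esub> e \<otimes>\<^bsub>G\<^esub> \<pi> k \<in> \<pi> ` Y"
      using subsetD[OF assms(3) imageI[OF e]] .
    then obtain y where y: "y \<in> Y" "\<pi> y = inv\<^bsub>G\<^esub> \<pi> k \<otimes>\<^bsub>G\<^esub> e \<otimes>\<^bsub>G\<^esub> \<pi> k"
      by (metis imageE)
    have "y \<in> carrier S" "e \<in> carrier G"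
      using y Y e D_carrier subgroup.subset by auto
    moreover define s where "s = k \<otimes>\<^bsub>S\<^esub> y \<otimes>\<^bsub>S\<^esub> inv\<^bsub>S\<^esub> k"
    ultimately have "s \<in> carrier S" "\<pi> s = e" "?conj s = y"
      using k y by (simp_all add: G.m_assoc S.m_assoc)
    then show "e \<in> \<pi> ` ?T"
      using e y by blast
  qed
  then have "\<pi> ` ?T = D"
    by blast
  then show ?thesis
    using minimal T by blast
qed

lemma lift_le:
  assumes Y: "subgroup Y S" and "conj_gen G D H \<subseteq> \<pi> ` Y"
  shows "lift H \<subseteq> Y"
  unfolding lift_def conj_gen_eq_generate_conjugates
proof (intro S.generate_subgroup_incl[OF _ Y] subsetI)
  fix w assume "w \<in> conjugates S Dt (carrier S \<inter> \<pi> -` H)"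
  then obtain d k where "d \<in> Dt" "k \<in> carrier S" "\<pi> k \<in> H"
    and w: "w = inv\<^bsub>S\<^esub> k \<otimes>\<^bsub>S\<^esub> d \<otimes>\<^bsub>S\<^esub> k"
    by (auto elim!: conjugatesE)
  moreover have "(\<lambda>x. inv\<^bsub>G\<^esub> \<pi> k \<otimes>\<^bsub>G\<^esub> x \<otimes>\<^bsub>G\<^esub> \<pi> k) ` D \<subseteq> \<pi> ` Y"
    using \<open>\<pi> k \<in> H\<close> assms(2) by (auto intro: G.conj_gen_conjI)
  ultimately show "w \<in> Y"
    using conj_Dt_subset[OF Y] by blast
qed

lemma vimage_sub_lattice: "H \<in> sub_lattice G D \<Longrightarrow> carrier S \<inter> \<pi> -` H \<in> sub_lattice S Dt"
  unfolding sub_lattice_def using Dt_carrier image_Dt by (auto intro: \<pi>.subgroup_vimage)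

lemma image_sub_lattice: "Ht \<in> sub_lattice S Dt \<Longrightarrow> \<pi> ` Ht \<in> sub_lattice G D"
  unfolding sub_lattice_def using image_Dt by (auto intro: \<pi>.subgroup_img_is_subgroup)

lemma conj_gen_image_sub_lattice: "conj_gen S Dt ` sub_lattice S Dt = lift ` sub_lattice G D"
proof (intro equalityI subsetI)
  fix K assume "K \<in> conj_gen S Dt ` sub_lattice S Dt"
  then obtain Ht where Ht: "Ht \<in> sub_lattice S Dt" and K: "K = conj_gen S Dt Ht"
    by blast
  then have "Ht \<subseteq> carrier S"
    unfolding sub_lattice_def using subgroup.subset by blast
  then have "K = lift (\<pi> ` Ht)"
    using K conj_gen_eq_lift by simp
  then show "K \<in> lift ` sub_lattice G D"
    using image_sub_lattice[OF Ht] by blast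
next
  fix K assume "K \<in> lift ` sub_lattice G D"
  then show "K \<in> conj_gen S Dt ` sub_lattice S Dt"
    unfolding lift_def using vimage_sub_lattice by blast
qed

lemma lift_stable_iff:
  assumes "H \<in> sub_lattice G D"
  shows "conj_gen S Dt (lift H) = lift H \<longleftrightarrow> conj_gen G D (conj_gen G D H) = conj_gen G D H"
proof -
  let ?E = "conj_gen G D H"
  have H: "subgroup H G" "D \<subseteq> H"
    using assms unfolding sub_lattice_def by auto
  then have EH: "?E \<subseteq> H" and HG: "H \<subseteq> carrier G"
    using G.conj_gen_le subgroup.subset by blast+
  then have EG: "?E \<subseteq> carrier G"
    by blast
  have shift: "conj_gen S Dt (lift H) = lift ?E"
    using conj_gen_eq_lift[OF subgroup.subset[OF lift_subgroup]] image_lift[OF HG] by simp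
  show ?thesis
  proof
    assume "conj_gen S Dt (lift H) = lift H"
    then show "conj_gen G D ?E = ?E"
      using shift image_lift[OF EG] image_lift[OF HG] by metis
  next
    assume "conj_gen G D ?E = ?E"
    then have "lift H \<subseteq> lift ?E"
      using lift_le[OF lift_subgroup] image_lift[OF EG] by simp
    then show "conj_gen S Dt (lift H) = lift H"
      using shift lift_mono[OF EH] by blast
  qed
qed

lemma sandwich_classification_lift_iff:
  "sandwich_classification S Dt \<longleftrightarrow> sandwich_classification G D"
proof -
  have "sandwich_classification S Dt \<longleftrightarrow>
      (\<forall>K \<in> conj_gen S Dt ` sub_lattice S Dt. conj_gen S Dt K = K)"
    using S.sandwich_classification_iff[OF Dt_carrier] by blast
  also have "\<dots> \<longleftrightarrow> (\<forall>H \<in> sub_lattice G D. conj_gen S Dt (lift H) = lift H)"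
    unfolding conj_gen_image_sub_lattice by blast
  also have "\<dots> \<longleftrightarrow> sandwich_classification G D"
    using G.sandwich_classification_iff[OF D_carrier] lift_stable_iff by blast
  finally show ?thesis .
qed

lemma full_image:
  assumes "full S Dt F"
  shows "full G D (\<pi> ` F)"
proof -
  have F: "F \<in> sub_lattice S Dt" "conj_gen S Dt F = F"
    using assms unfolding full_def by auto
  then have "F \<subseteq> carrier S"
    unfolding sub_lattice_def using subgroup.subset by blast
  then have "conj_gen G D (\<pi> ` F) = \<pi> ` F"
    using F(2) \<pi>.image_conj_gen[OF Dt_carrier, of F] image_Dt by simp
  then show ?thesis
    using image_sub_lattice[OF F(1)] unfolding full_def by simp
qed

lemma image_lift_full:
  assumes "full G D E"
  shows "\<pi> ` lift E = E"
proof -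
  have "E \<subseteq> carrier G" "conj_gen G D E = E"
    using assms subgroup.subset unfolding full_def sub_lattice_def by auto
  then show ?thesis
    by (simp add: image_lift)
qed

lemma lift_image_full:
  assumes "full S Dt F"
  shows "lift (\<pi> ` F) = F"
proof -
  have "F \<subseteq> carrier S" "conj_gen S Dt F = F"
    using assms subgroup.subset unfolding full_def sub_lattice_def by auto
  then show ?thesis
    using conj_gen_eq_lift by simp
qed

lemma full_lift:
  assumes "full G D E"
  shows "full S Dt (lift E)"
proof -
  have E: "E \<in> sub_lattice G D" "conj_gen G D E = E"
    using assms unfolding full_def by auto
  have "carrier S \<inter> \<pi> -` E \<in> sub_lattice S Dt"
    using E(1) by (rule vimage_sub_lattice)
  then have "Dt \<subseteq> lift E"
    unfolding lift_def sub_lattice_def using S.conj_gen_greater[OF Dt_carrier] by blast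
  moreover have "conj_gen S Dt (lift E) = lift E"
    using lift_stable_iff[OF E(1)] E(2) by simp
  ultimately show ?thesis
    unfolding full_def sub_lattice_def using lift_subgroup by blast
qed

lemma bij_betw_image_full: "bij_betw (\<lambda>F. \<pi> ` F) {F. full S Dt F} {F. full G D F}"
  by (rule bij_betw_byWitness[where f' = lift])
     (simp_all add: lift_image_full image_lift_full image_subset_iff full_image full_lift)

end

theorem lemma2p4:
  fixes G :: "('a, 'c) monoid_scheme" and S :: "('b, 'd) monoid_scheme"
    and \<pi> :: "'b \<Rightarrow> 'a" and D :: "'a set" and Dt :: "'b set"
  assumes "group G" and "group S"
    and "perfect G D"
    and "\<pi> \<in> hom S G" and "\<pi> ` carrier S = carrier G"
    and "\<forall>k \<in> kernel S G \<pi>. \<forall>s \<in> carrier S. k \<otimes>\<^bsub>S\<^esub> s = s \<otimes>\<^bsub>S\<^esub> k"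
    and "subgroup Dt S" and "\<pi> ` Dt = D"
    and "\<forall>T. subgroup T S \<and> \<pi> ` T = D \<longrightarrow> Dt \<subseteq> T"
  shows "(sandwich_classification G D \<longleftrightarrow> sandwich_classification S Dt)
     \<and> bij_betw (\<lambda>F. \<pi> ` F) {F. full S Dt F} {F. full G D F}"
proof -
  interpret minimal_lift G S \<pi> D Dt
    using assms unfolding minimal_lift_def minimal_lift_axioms_def
      central_extension_def central_extension_axioms_def by blast
  show ?thesis
    using sandwich_classification_lift_iff bij_betw_image_full by blast
qed

end
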